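(* Let $V$, $R$, the radius levels $r_1<\dots<r_k=R$, $G_R$ and $G_\alpha$ be as in the context, and let $0<\alpha\le 5\pi/6$. Then for all $u,v\in V$: $u$ and $v$ are connected by a path in $G_\alpha$ if and only if they are connected by a path in $G_R$.
   Context: Let $V$ be a finite set of pairwise distinct points (nodes) in the Euclidean plane, $d$ the Euclidean distance, and $R>0$. Let $G_R=(V,E)$ be the undirected graph with $E=\{\{u,v\}: u\neq v,\ d(u,v)\le R\}$. Fix a finite increasing sequence of radius levels $0<r_1<r_2<\dots<r_k=R$. For $u\in V$ and $1\le i\le k$ let $S_i(u)=\{v\in V\setminus\{u\}: d(u,v)\le r_i\}$. For $0<\alpha<2\pi$, a closed cone of width $\alpha$ with apex $u$ is a set $\{u+t(\cos\varphi,\sin\varphi): t\ge 0,\ \varphi\in[\theta-\alpha/2,\theta+\alpha/2]\}$ for some $\theta$; $\mathrm{cone}(u,\alpha,v)$ denotes the closed cone of width $\alpha$ with apex $u$ bisected by the ray from $u$ through $v$. A finite set $S\subseteq V\setminus\{u\}$ has an $\alpha$-gap (at $u$) if some closed cone of width $\alpha$ with apex $u$ contains no node of $S$ (in particular $\emptyset$ has an $\alpha$-gap). The algorithm CBTC($\alpha$) assigns to each $u$ the index $i_u$ = the least $i\in\{1,\dots,k\}$ such that $S_i(u)$ has no $\alpha$-gap, or $i_u=k$ if there is no such $i$; set $N_\alpha(u)=S_{i_u}(u)$ and $N_\alpha=\{(u,v): v\in N_\alpha(u)\}$. Let $E_\alpha=\{\{u,v\}: (u,v)\in N_\alpha \text{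 or } (v,u)\in N_\alpha\}$ (the symmetric closure of $N_\alpha$) and $G_\alpha=(V,E_\alpha)$. *)

theory Defs
  imports "HOL-Analysis.Analysis"
begin

text \<open>Points of the Euclidean plane are represented as complex numbers.\<close>

definition cone :: "complex \<Rightarrow> real \<Rightarrow> real \<Rightarrow> complex set" where
  "cone u \<alpha> \<theta> = {u + complex_of_real t * cis \<phi> | t \<phi>.
      t \<ge> 0 \<and> \<theta> - \<alpha>/2 \<le> \<phi> \<and> \<phi> \<le> \<theta> + \<alpha>/2}"

definition has_gap :: "complex \<Rightarrow> real \<Rightarrow> complex set \<Rightarrow> bool" where
  "has_gap u \<alpha> S \<longleftrightarrow> (\<exists>\<theta>. \<forall>v\<in>S. v \<notin> cone u \<alpha> \<theta>)"

text \<open>Radius levels r 1 < ... < r k = R; indices 1..k.\<close>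
definition S_level :: "complex set \<Rightarrow> (nat \<Rightarrow> real) \<Rightarrow> nat \<Rightarrow> complex \<Rightarrow> complex set" where
  "S_level V r i u = {v \<in> V - {u}. dist u v \<le> r i}"

definition cbtc_index :: "complex set \<Rightarrow> (nat \<Rightarrow> real) \<Rightarrow> nat \<Rightarrow> real \<Rightarrow> complex \<Rightarrow> nat" where
  "cbtc_index V r k \<alpha> u =
     (if \<exists>i\<in>{1..k}. \<not> has_gap u \<alpha> (S_level V r i u)
      then LEAST i. i \<in> {1..k} \<and> \<not> has_gap u \<alpha> (S_level V r i u)
      else k)"

definition N_alpha :: "complex set \<Rightarrow> (nat \<Rightarrow> real) \<Rightarrow> nat \<Rightarrow> real \<Rightarrow> complex \<Rightarrow> complex set" where
  "N_alpha V r k \<alpha> u = S_level V r (cbtc_index V r k \<alpha> u) u"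

definition edge_R :: "complex set \<Rightarrow> real \<Rightarrow> complex \<Rightarrow> complex \<Rightarrow> bool" where
  "edge_R V R u v \<longleftrightarrow> u \<in> V \<and> v \<in> V \<and> u \<noteq> v \<and> dist u v \<le> R"

definition edge_alpha :: "complex set \<Rightarrow> (nat \<Rightarrow> real) \<Rightarrow> nat \<Rightarrow> real \<Rightarrow> complex \<Rightarrow> complex \<Rightarrow> bool" where
  "edge_alpha V r k \<alpha> u v \<longleftrightarrow> u \<in> V \<and> v \<in> V \<and>
     (v \<in> N_alpha V r k \<alpha> u \<or> u \<in> N_alpha V r k \<alpha> v)"

end

theory Submission
  imports Defs
begin

text \<open>
  Every edge of G_alpha is an edge of G_R. Conversely, by induction on dist x y over the finitely
  many pairs of nodes, it suffices to find for each edge x y of G_R that is not an edge of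
  G_alpha a pair in ({x} \<union> N_alpha(x)) \<times> ({y} \<union> N_alpha(y)) shorter than x y. As neither
  endpoint chose the other, N_alpha(x) and N_alpha(y) have no alpha-gap and lie strictly inside
  the discs of radius dist x y about x and y. If no pair were shorter, then in the frame x = 0,
  y = 1 every neighbour of x would lie in the lune |w| < 1 \<le> |w - 1|, so that x w makes an angle
  larger than pi/3 with x y; likewise at y. Having no alpha-gap, each neighbourhood has points
  on both sides of the line x y at angular distance at most alpha, so on one side there are
  neighbours of x and of y whose angles at x and at y sum to at most alpha \<le> 5 pi/6. A
  trigonometric estimate shows that these two neighbours are closer than dist x y.
\<close>

lemma monic_quadratic_neg_between:
  fixes lo hi x \<beta> \<gamma> :: real
  assumes "lo \<le> x" "x \<le> hi"
    and lo: "lo\<^sup>2 + \<beta> * lo + \<gamma> < 0" and hi: "hi\<^sup>2 + \<beta> * hi + \<gamma> < 0"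
  shows "x\<^sup>2 + \<beta> * x + \<gamma> < 0"
proof (cases "x = hi")
  case False
  then have "x < hi" using assms by simp
  have "(hi - lo) * (x\<^sup>2 + \<beta> * x + \<gamma>) =
      (hi - x) * (lo\<^sup>2 + \<beta> * lo + \<gamma>) + (x - lo) * (hi\<^sup>2 + \<beta> * hi + \<gamma>)
      + (hi - lo) * ((x - lo) * (x - hi))"
    by (simp add: power2_eq_square algebra_simps)
  also have "\<dots> < 0"
  proof -
    have "(hi - x) * (lo\<^sup>2 + \<beta> * lo + \<gamma>) < 0"
      using \<open>x < hi\<close> lo by (simp add: mult_pos_neg)
    moreover have "(x - lo) * (hi\<^sup>2 + \<beta> * hi + \<gamma>) \<le> 0"
      using assms by (simp add: mult_nonneg_nonpos)
    moreover have "(hi - lo) * ((x - lo) * (x - hi)) \<le> 0"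
      using assms by (simp add: mult_nonneg_nonpos)
    ultimately show ?thesis by linarith
  qed
  finally show ?thesis using \<open>x < hi\<close> assms(1) by (simp add: mult_less_0_iff)
qed (use hi in simp)

lemma Re_Im_cmod_Arg:
  "Re z = cmod z * cos (Arg z)" "Im z = cmod z * sin (Arg z)"
  by (metis Re_rcis rcis_cmod_Arg, metis Im_rcis rcis_cmod_Arg)

lemma cmod_sub_one_squared:
  "(cmod (z - 1))\<^sup>2 = (cmod z)\<^sup>2 - 2 * cmod z * cos (Arg z) + 1"
proof -
  have "(cmod (z - 1))\<^sup>2 = (Re z - 1)\<^sup>2 + (Im z)\<^sup>2"
    by (simp add: cmod_power2)
  also have "\<dots> = (cmod z)\<^sup>2 * ((sin (Arg z))\<^sup>2 + (cos (Arg z))\<^sup>2) - 2 * cmod z * cos (Arg z) + 1"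
    unfolding Re_Im_cmod_Arg by algebra
  finally show ?thesis by simp
qed

definition lune :: "complex set" where
  "lune = {z. z \<noteq> 0 \<and> cmod z < 1 \<and> 1 \<le> cmod (z - 1)}"

lemma lune_Arg_bounds:
  assumes "z \<in> lune"
  shows "2 * cos (Arg z) \<le> cmod z" "pi/3 < \<bar>Arg z\<bar>"
proof -
  have "1 \<le> (cmod (z - 1))\<^sup>2"
    using assms by (simp add: lune_def one_le_power)
  then have "2 * cmod z * cos (Arg z) \<le> cmod z * cmod z"
    using cmod_sub_one_squared[of z] unfolding power2_eq_square by linarith
  moreover have "0 < cmod z" using assms by (simp add: lune_def)
  ultimately show le: "2 * cos (Arg z) \<le> cmod z"
    by (simp add: mult.assoc)
  show "pi/3 < \<bar>Arg z\<bar>"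
  proof (rule ccontr)
    assume "\<not> pi/3 < \<bar>Arg z\<bar>"
    then have "cos (pi/3) \<le> cos \<bar>Arg z\<bar>"
      by (intro cos_monotone_0_pi_le) auto
    then have "1 \<le> 2 * cos (Arg z)" by (simp add: cos_60)
    with le assms show False by (simp add: lune_def)
  qed
qed

lemma cos_sum_inequalities:
  fixes p q :: real
  assumes "pi/3 < p" "pi/3 < q" "p + q \<le> 5*pi/6"
  shows "0 < cos p" "cos (p + q) < 0"
    and "1 + 4 * cos p * cos (p + q) < 2 * cos q"
    and "1 + cos (p + q) < cos p + cos q"
proof -
  show "0 < cos p" using assms by (intro cos_gt_zero_pi) auto
  have "cos (p + q) < cos (pi/2)"
    using assms by (intro cos_monotone_0_pi) auto
  then show "cos (p + q) < 0" by simp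
  have "2 * cos p * cos (p + q) = cos q + cos (2*p + q)"
    using cos_times_cos[of p "p + q"] by (simp add: algebra_simps)
  moreover have "cos (2*p + q) < - 1/2"
  proof -
    have "cos (pi/3) < cos (2*p + q - pi)"
      using assms by (intro cos_monotone_0_pi) auto
    then show ?thesis by (simp add: cos_60)
  qed
  ultimately show "1 + 4 * cos p * cos (p + q) < 2 * cos q"
    by linarith
  define m h where "m = (p + q)/2" and "h = (p - q)/2"
  have "p + q = 2 * m" by (simp add: m_def)
  have "cos p + cos q = 2 * cos m * cos h"
    by (simp add: cos_plus_cos m_def h_def)
  moreover have "1 + cos (p + q) = 2 * cos m * cos m"
    using cos_double_cos[of m] \<open>p + q = 2 * m\<close> by (simp add: power2_eq_square)
  moreover have "0 < cos m" using assms by (intro cos_gt_zero_pi) (auto simp: m_def)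
  moreover have "cos m < cos \<bar>h\<bar>"
    using assms by (intro cos_monotone_0_pi) (auto simp: m_def h_def)
  ultimately show "1 + cos (p + q) < cos p + cos q"
    by simp
qed

text \<open>The squared distance is a monic quadratic both in a and in b, so it suffices to check
  the corners of [2 cos p, 1] \<times> [2 cos q, 1].\<close>
lemma rcis_pair_close:
  assumes "a < 1" "2 * cos p \<le> a" "b < 1" "2 * cos q \<le> b"
    and "pi/3 < p" "pi/3 < q" "p + q \<le> 5*pi/6"
  shows "cmod (rcis a p + rcis b (- q) - 1) < 1"
proof -
  define c c' \<kappa> where "c = cos p" and "c' = cos q" and "\<kappa> = cos (p + q)"
  have "0 < c" "\<kappa> < 0" "1 + 4 * c * \<kappa> < 2 * c'" "1 + \<kappa> < c + c'"
    using cos_sum_inequalities[OF assms(5-7)] by (simp_all add: c_def c'_def \<kappa>_def)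
  moreover have "0 < c'" "1 + 4 * c' * \<kappa> < 2 * c"
    using cos_sum_inequalities[of q p] assms(5-7) by (simp_all add: c_def c'_def \<kappa>_def add.commute)
  ultimately have "c * c' * \<kappa> < 0"
    by (simp add: mult_pos_neg)
  have b_range: "2 * c' \<le> b" "b \<le> 1"
    using assms(3,4) by (simp_all add: c'_def)
  have at_2c: "b\<^sup>2 + (4 * c * \<kappa> - 2 * c') * b + 0 < 0"
    using b_range \<open>c * c' * \<kappa> < 0\<close> \<open>1 + 4 * c * \<kappa> < 2 * c'\<close>
    by (intro monic_quadratic_neg_between[of "2 * c'" b 1]) (simp_all add: power2_eq_square algebra_simps)
  have at_1: "b\<^sup>2 + (2 * \<kappa> - 2 * c') * b + (1 - 2 * c) < 0"
    using b_range \<open>1 + 4 * c' * \<kappa> < 2 * c\<close> \<open>1 + \<kappa> < c + c'\<close>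
    by (intro monic_quadratic_neg_between[of "2 * c'" b 1]) (simp_all add: power2_eq_square algebra_simps)
  have "a\<^sup>2 + (2 * b * \<kappa> - 2 * c) * a + (b\<^sup>2 - 2 * b * c') < 0"
    using assms(1,2) at_2c at_1
    by (intro monic_quadratic_neg_between[of "2 * c" a 1])
      (simp_all add: c_def power2_eq_square algebra_simps)
  have "(cmod (rcis a p + rcis b (- q) - 1))\<^sup>2 =
      (a * cos p + b * cos q - 1)\<^sup>2 + (a * sin p - b * sin q)\<^sup>2"
    by (simp add: cmod_power2)
  also have "\<dots> = a\<^sup>2 * ((sin p)\<^sup>2 + (cos p)\<^sup>2) + b\<^sup>2 * ((sin q)\<^sup>2 + (cos q)\<^sup>2) + 1
      + 2 * a * b * (cos p * cos q - sin p * sin q) - 2 * a * cos p - 2 * b * cos q"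
    by algebra
  also have "\<dots> = a\<^sup>2 + (2 * b * \<kappa> - 2 * c) * a + (b\<^sup>2 - 2 * b * c') + 1"
    by (simp add: c_def c'_def \<kappa>_def cos_add algebra_simps)
  finally have "(cmod (rcis a p + rcis b (- q) - 1))\<^sup>2 < 1"
    using \<open>a\<^sup>2 + (2 * b * \<kappa> - 2 * c) * a + (b\<^sup>2 - 2 * b * c') < 0\<close> by linarith
  then show ?thesis
    by (simp add: power_less_one_iff)
qed

lemma lune_pair_close:
  assumes "w \<in> lune" "t \<in> lune" "0 < Arg w" "Arg t < 0" "Arg w - Arg t \<le> 5*pi/6"
  shows "cmod (w + t - 1) < 1"
proof -
  have "w + t - 1 = rcis (cmod w) (Arg w) + rcis (cmod t) (- (- Arg t)) - 1"
    by (simp add: rcis_cmod_Arg)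
  also have "cmod \<dots> < 1"
  proof (rule rcis_pair_close)
    show "cmod w < 1" "cmod t < 1"
      using assms(1,2) by (simp_all add: lune_def)
    show "2 * cos (Arg w) \<le> cmod w" "2 * cos (- Arg t) \<le> cmod t"
      using lune_Arg_bounds(1) assms(1,2) by simp_all
    show "pi/3 < Arg w" "pi/3 < - Arg t"
      using lune_Arg_bounds(2) assms(1-4) by force+
  qed (use assms(5) in simp)
  finally show ?thesis .
qed

lemma no_gap_imp_straddling_pair:
  assumes "finite A" "\<not> has_gap 0 \<alpha> A" "\<alpha> \<le> pi" "\<forall>z\<in>A. Arg z \<noteq> 0"
  shows "\<exists>z1\<in>A. \<exists>z2\<in>A. 0 < Arg z1 \<and> Arg z2 < 0 \<and> Arg z1 - Arg z2 \<le> \<alpha>"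
proof -
  \<comment> \<open>p and q are the smallest angles above and below the positive real axis (pi if there is
    none); the cone of width alpha bisecting the sector between them contains a point of A,
    which forces p + q \<le> alpha.\<close>
  define P Q where "P = Arg ` {z\<in>A. 0 < Arg z}" and "Q = (\<lambda>z. - Arg z) ` {z\<in>A. Arg z < 0}"
  define p q where "p = Min (insert pi P)" and "q = Min (insert pi Q)"
  have fin: "finite P" "finite Q"
    using assms(1) by (simp_all add: P_def Q_def)
  have "\<forall>s\<in>insert pi P. 0 < s \<and> s \<le> pi"
    using Arg_le_pi by (auto simp: P_def)
  moreover have "\<forall>s\<in>insert pi Q. 0 < s \<and> s \<le> pi"
    using mpi_less_Arg by (auto simp: Q_def minus_less_iff less_imp_le)
  ultimately
  have p: "0 < p" "p \<le> pi" and q: "0 < q" "q \<le> pi"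
    using Min_in[of "insert pi P"] Min_in[of "insert pi Q"] fin by (auto simp: p_def q_def)
  have "p + q \<le> \<alpha>"
  proof (rule ccontr)
    assume "\<not> p + q \<le> \<alpha>"
    obtain z where "z \<in> A" and "z \<in> cone 0 \<alpha> ((p - q)/2)"
      using assms(2) unfolding has_gap_def by blast
    then obtain t \<phi> where z: "z = of_real t * cis \<phi>" and "t \<ge> 0"
      and "(p - q)/2 - \<alpha>/2 \<le> \<phi>" "\<phi> \<le> (p - q)/2 + \<alpha>/2"
      unfolding cone_def by auto
    then have \<phi>: "\<phi> < p" "- q < \<phi>"
      using \<open>\<not> p + q \<le> \<alpha>\<close> by (auto simp: field_simps)
    have "Arg z \<noteq> 0" using \<open>z \<in> A\<close> assms(4) by blast
    then have "t > 0" using z \<open>t \<ge> 0\<close> by (cases "t = 0") (auto simp: Arg_zero)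
    then have "Arg z = \<phi>"
      using \<phi> p q by (intro Arg_unique'[of t]) (auto simp: z rcis_def)
    consider "0 < \<phi>" | "\<phi> < 0" | "\<phi> = 0" by linarith
    then show False
    proof cases
      case 1
      then have "\<phi> \<in> P" using \<open>z \<in> A\<close> \<open>Arg z = \<phi>\<close> by (force simp: P_def)
      then show False using fin \<phi> by (auto simp: p_def)
    next
      case 2
      then have "- \<phi> \<in> Q" using \<open>z \<in> A\<close> \<open>Arg z = \<phi>\<close> by (force simp: Q_def)
      then show False using fin \<phi> by (auto simp: q_def)
    qed (use \<open>Arg z \<noteq> 0\<close> \<open>Arg z = \<phi>\<close> in simp)
  qed
  then have "p \<noteq> pi" "q \<noteq> pi"
    using assms(3) p q by linarith+
  then have "p \<in> P" "q \<in> Q"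
    using Min_in[of "insert pi P"] Min_in[of "insert pi Q"] fin by (auto simp: p_def q_def)
  then show ?thesis
    using \<open>p + q \<le> \<alpha>\<close> by (force simp: P_def Q_def)
qed

definition seg_coord :: "complex \<Rightarrow> complex \<Rightarrow> complex \<Rightarrow> complex" where
  "seg_coord x y z = (z - x) / (y - x)"

lemma seg_coord_swap: "x \<noteq> y \<Longrightarrow> seg_coord y x z = 1 - seg_coord x y z"
  unfolding seg_coord_def by (simp add: field_simps)

lemma norm_seg_coord_diff: "cmod (seg_coord x y z - seg_coord x y z') = dist z z' / dist x y"
proof -
  have "seg_coord x y z - seg_coord x y z' = (z - z') / (y - x)"
    unfolding seg_coord_def by (simp add: diff_divide_distrib)
  then show ?thesis
    by (simp add: norm_divide dist_norm norm_minus_commute)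
qed

lemma seg_coord_in_lune:
  assumes "w \<noteq> x" "dist x w < dist x y" "dist x y \<le> dist w y"
  shows "seg_coord x y w \<in> lune"
proof -
  have "x \<noteq> y" using assms(2) by auto
  have "cmod (seg_coord x y w) = dist w x / dist x y"
    using norm_seg_coord_diff[of x y w x] by (simp add: seg_coord_def)
  moreover have "cmod (seg_coord x y w - 1) = dist w y / dist x y"
    using norm_seg_coord_diff[of x y w y] \<open>x \<noteq> y\<close> by (simp add: seg_coord_def)
  ultimately show ?thesis
    using assms \<open>x \<noteq> y\<close> by (simp add: lune_def seg_coord_def dist_commute)
qed

lemma no_gap_seg_coord:
  assumes "x \<noteq> y" "\<not> has_gap x \<alpha> A"
  shows "\<not> has_gap 0 \<alpha> (seg_coord x y ` A)"
  unfolding has_gap_def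
proof (intro notI, elim exE)
  fix \<theta> assume gap: "\<forall>z\<in>seg_coord x y ` A. z \<notin> cone 0 \<alpha> \<theta>"
  define d \<theta>0 where "d = cmod (y - x)" and "\<theta>0 = Arg (y - x)"
  have "d > 0" using assms(1) by (simp add: d_def)
  have yx: "y - x = of_real d * cis \<theta>0"
    using rcis_cmod_Arg[of "y - x"] by (simp add: d_def \<theta>0_def rcis_def)
  obtain w where "w \<in> A" and "w \<in> cone x \<alpha> (\<theta> + \<theta>0)"
    using assms(2) unfolding has_gap_def by blast
  then obtain t \<phi> where w: "w = x + of_real t * cis \<phi>" and "t \<ge> 0"
    and "\<theta> + \<theta>0 - \<alpha>/2 \<le> \<phi>" "\<phi> \<le> \<theta> + \<theta>0 + \<alpha>/2"
    unfolding cone_def by auto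
  moreover have "seg_coord x y w = 0 + of_real (t/d) * cis (\<phi> - \<theta>0)"
    using \<open>d > 0\<close> by (simp add: seg_coord_def w yx cis_divide[symmetric] field_simps)
  ultimately have "seg_coord x y w \<in> cone 0 \<alpha> \<theta>"
    unfolding cone_def using \<open>d > 0\<close> by fastforce
  with gap \<open>w \<in> A\<close> show False by blast
qed

lemma seg_coord_pair_close:
  assumes "x \<noteq> y" "seg_coord x y w \<in> lune" "seg_coord y x t \<in> lune"
    and "0 < Arg (seg_coord x y w)" "Arg (seg_coord y x t) < 0"
    and "Arg (seg_coord x y w) - Arg (seg_coord y x t) \<le> 5*pi/6"
  shows "dist w t < dist x y"
proof -
  have "dist w t / dist x y = cmod (seg_coord x y w + seg_coord y x t - 1)"
    using norm_seg_coord_diff[of x y w t] seg_coord_swap[OF assms(1)] by simp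
  also have "\<dots> < 1"
    using lune_pair_close assms(2-6) by blast
  finally show ?thesis
    using assms(1) by simp
qed

lemma no_gaps_imp_shorter_pair:
  assumes "x \<noteq> y" "finite A" "finite B"
    and A: "\<forall>w\<in>A. w \<noteq> x \<and> dist x w < dist x y"
    and B: "\<forall>t\<in>B. t \<noteq> y \<and> dist y t < dist x y"
    and "\<not> has_gap x \<alpha> A" "\<not> has_gap y \<alpha> B" "\<alpha> \<le> 5*pi/6"
  shows "\<exists>z1\<in>insert x A. \<exists>z2\<in>insert y B. dist z1 z2 < dist x y"
proof (rule ccontr)
  assume "\<not> ?thesis"
  then have far: "dist x y \<le> dist z1 z2" if "z1 \<in> insert x A" "z2 \<in> insert y B" for z1 z2
    using that by force
  have "\<alpha> \<le> pi" using \<open>\<alpha> \<le> 5*pi/6\<close> pi_gt_zero by linarith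
  have straddle: "\<exists>w1\<in>C. \<exists>w2\<in>C. 0 < Arg (seg_coord a b w1) \<and> Arg (seg_coord a b w2) < 0
      \<and> Arg (seg_coord a b w1) - Arg (seg_coord a b w2) \<le> \<alpha>"
    if "a \<noteq> b" "finite C" "\<not> has_gap a \<alpha> C" "seg_coord a b ` C \<subseteq> lune" for a b C
  proof -
    have "\<exists>z1\<in>seg_coord a b ` C. \<exists>z2\<in>seg_coord a b ` C.
        0 < Arg z1 \<and> Arg z2 < 0 \<and> Arg z1 - Arg z2 \<le> \<alpha>"
      using that \<open>\<alpha> \<le> pi\<close> lune_Arg_bounds(2)
      by (intro no_gap_imp_straddling_pair no_gap_seg_coord) fastforce+
    then show ?thesis by blast
  qed
  have A_lune: "seg_coord x y ` A \<subseteq> lune"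
    using seg_coord_in_lune A far by blast
  obtain w1 w2 where "w1 \<in> A" "w2 \<in> A"
    and w: "0 < Arg (seg_coord x y w1)" "Arg (seg_coord x y w2) < 0"
      "Arg (seg_coord x y w1) - Arg (seg_coord x y w2) \<le> \<alpha>"
    using straddle[OF assms(1,2,6) A_lune] by blast
  have B_lune: "seg_coord y x ` B \<subseteq> lune"
    using seg_coord_in_lune B far by (fastforce simp: dist_commute)
  obtain t1 t2 where "t1 \<in> B" "t2 \<in> B"
    and t: "0 < Arg (seg_coord y x t1)" "Arg (seg_coord y x t2) < 0"
      "Arg (seg_coord y x t1) - Arg (seg_coord y x t2) \<le> \<alpha>"
    using straddle[OF _ assms(3,7) B_lune] \<open>x \<noteq> y\<close> by blast
  consider "Arg (seg_coord x y w1) - Arg (seg_coord y x t2) \<le> 5*pi/6"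
    | "Arg (seg_coord y x t1) - Arg (seg_coord x y w2) \<le> 5*pi/6"
    using w(3) t(3) \<open>\<alpha> \<le> 5*pi/6\<close> by linarith
  then show False
  proof cases
    case 1
    then have "dist w1 t2 < dist x y"
      using seg_coord_pair_close[OF \<open>x \<noteq> y\<close> _ _ w(1) t(2)] A_lune B_lune
        \<open>w1 \<in> A\<close> \<open>t2 \<in> B\<close>
      by blast
    then show False using far \<open>w1 \<in> A\<close> \<open>t2 \<in> B\<close> by fastforce
  next
    case 2
    then have "dist t1 w2 < dist y x"
      using seg_coord_pair_close[OF _ _ _ t(1) w(2)] A_lune B_lune
        \<open>w2 \<in> A\<close> \<open>t1 \<in> B\<close> \<open>x \<noteq> y\<close>
      by blast
    then show False using far \<open>w2 \<in> A\<close> \<open>t1 \<in> B\<close> by (fastforce simp: dist_commute)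
  qed
qed

lemma finite_dist_induct[consumes 3, case_names less]:
  fixes V :: "'a::metric_space set"
  assumes "finite V" "x \<in> V" "y \<in> V"
    and step: "\<And>x y. x \<in> V \<Longrightarrow> y \<in> V \<Longrightarrow>
      (\<And>x' y'. x' \<in> V \<Longrightarrow> y' \<in> V \<Longrightarrow> dist x' y' < dist x y \<Longrightarrow> P x' y') \<Longrightarrow> P x y"
  shows "P x y"
proof -
  define closer where "closer d = {(x', y') \<in> V \<times> V. dist x' y' < d}" for d
  have "finite (closer d)" for d
    using assms(1) by (auto simp: closer_def intro: finite_subset[of _ "V \<times> V"])
  show ?thesis
    using assms(2,3)
  proof (induction "card (closer (dist x y))" arbitrary: x y rule: less_induct)
    case less
    show ?case
    proof (rule step[OF less.prems])
      fix x' y' assume "x' \<in> V" "y' \<in> V" "dist x' y' < dist x y"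
      then have "closer (dist x' y') \<subset> closer (dist x y)"
        by (auto simp: closer_def)
      then have "card (closer (dist x' y')) < card (closer (dist x y))"
        using \<open>finite (closer (dist x y))\<close> by (rule psubset_card_mono[rotated])
      then show "P x' y'"
        using less.hyps \<open>x' \<in> V\<close> \<open>y' \<in> V\<close> by blast
    qed
  qed
qed

lemma S_level_subset: "S_level V r i u \<subseteq> V - {u}"
  by (auto simp: S_level_def)

lemma N_alpha_subset: "N_alpha V r k \<alpha> u \<subseteq> V - {u}"
  by (simp add: N_alpha_def S_level_subset)

lemma cbtc_index_bounds:
  assumes "1 \<le> k"
  shows "cbtc_index V r k \<alpha> u \<in> {1..k}"
proof (cases "\<exists>i\<in>{1..k}. \<not> has_gap u \<alpha> (S_level V r i u)")
  case True
  then have "\<exists>i. i \<in> {1..k} \<and> \<not> has_gap u \<alpha> (S_level V r i u)" by blast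
  from LeastI_ex[OF this] True show ?thesis
    unfolding cbtc_index_def by auto
qed (use assms in \<open>simp add: cbtc_index_def\<close>)

lemma N_alpha_subset_S_level:
  assumes "1 \<le> k" "mono_on {1..k} r"
  shows "N_alpha V r k \<alpha> u \<subseteq> S_level V r k u"
proof -
  have "r (cbtc_index V r k \<alpha> u) \<le> r k"
    using cbtc_index_bounds[OF assms(1)] assms by (auto intro: mono_onD)
  then show ?thesis
    by (auto simp: N_alpha_def S_level_def)
qed

lemma N_alpha_if_excluded:
  assumes "y \<in> S_level V r k x" "y \<notin> N_alpha V r k \<alpha> x"
  shows "\<not> has_gap x \<alpha> (N_alpha V r k \<alpha> x)"
    and "\<forall>z\<in>N_alpha V r k \<alpha> x. dist x z < dist x y"
proof -
  have ex: "\<exists>i\<in>{1..k}. \<not> has_gap x \<alpha> (S_level V r i x)"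
  proof (rule ccontr)
    assume "\<not> ?thesis"
    then have "N_alpha V r k \<alpha> x = S_level V r k x"
      by (auto simp: N_alpha_def cbtc_index_def)
    with assms show False by simp
  qed
  define i where "i = (LEAST i. i \<in> {1..k} \<and> \<not> has_gap x \<alpha> (S_level V r i x))"
  have N: "N_alpha V r k \<alpha> x = S_level V r i x"
    unfolding N_alpha_def cbtc_index_def i_def using ex by simp
  have "\<exists>i. i \<in> {1..k} \<and> \<not> has_gap x \<alpha> (S_level V r i x)"
    using ex by blast
  from LeastI_ex[OF this] show "\<not> has_gap x \<alpha> (N_alpha V r k \<alpha> x)"
    unfolding N i_def by blast
  have "r i < dist x y"
    using assms unfolding N by (auto simp: S_level_def)
  then show "\<forall>z\<in>N_alpha V r k \<alpha> x. dist x z < dist x y"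
    by (auto simp: N S_level_def)
qed

lemma edge_alpha_imp_edge_R:
  assumes "1 \<le> k" "mono_on {1..k} r" "edge_alpha V r k \<alpha> u v"
  shows "edge_R V (r k) u v"
proof -
  have "v \<in> S_level V r k u \<or> u \<in> S_level V r k v"
    using assms(3) N_alpha_subset_S_level[OF assms(1,2)] by (auto simp: edge_alpha_def)
  then show ?thesis
    using assms(3) by (auto simp: edge_alpha_def edge_R_def S_level_def dist_commute)
qed

lemma cbtc_shorter_pair:
  assumes "finite V" "\<alpha> \<le> 5*pi/6" "edge_R V (r k) x y" "\<not> edge_alpha V r k \<alpha> x y"
  shows "\<exists>z1\<in>insert x (N_alpha V r k \<alpha> x). \<exists>z2\<in>insert y (N_alpha V r k \<alpha> y).
    dist z1 z2 < dist x y"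
proof (rule no_gaps_imp_shorter_pair)
  have "y \<in> S_level V r k x" "x \<in> S_level V r k y"
    using assms(3) by (auto simp: edge_R_def S_level_def dist_commute)
  moreover have "y \<notin> N_alpha V r k \<alpha> x" "x \<notin> N_alpha V r k \<alpha> y"
    using assms(3,4) by (auto simp: edge_R_def edge_alpha_def)
  ultimately have x_side: "\<not> has_gap x \<alpha> (N_alpha V r k \<alpha> x)"
      "\<forall>z\<in>N_alpha V r k \<alpha> x. dist x z < dist x y"
    and y_side: "\<not> has_gap y \<alpha> (N_alpha V r k \<alpha> y)"
      "\<forall>z\<in>N_alpha V r k \<alpha> y. dist y z < dist y x"
    using N_alpha_if_excluded by metis+
  show "\<not> has_gap x \<alpha> (N_alpha V r k \<alpha> x)" "\<not> has_gap y \<alpha> (N_alpha V r k \<alpha> y)"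
    using x_side y_side by simp_all
  show "\<forall>w\<in>N_alpha V r k \<alpha> x. w \<noteq> x \<and> dist x w < dist x y"
    using x_side(2) N_alpha_subset[of V r k \<alpha> x] by blast
  show "\<forall>t\<in>N_alpha V r k \<alpha> y. t \<noteq> y \<and> dist y t < dist x y"
    using y_side(2) N_alpha_subset[of V r k \<alpha> y] by (auto simp: dist_commute)
  show "finite (N_alpha V r k \<alpha> x)" "finite (N_alpha V r k \<alpha> y)"
    using N_alpha_subset assms(1) by (metis finite_Diff finite_subset)+
  show "x \<noteq> y" using assms(3) by (simp add: edge_R_def)
qed (fact assms(2))

lemma edge_R_imp_edge_alpha_path:
  assumes "finite V" "\<alpha> \<le> 5*pi/6" "edge_R V (r k) a b"
  shows "(edge_alpha V r k \<alpha>)\<^sup>*\<^sup>* a b"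
proof -
  let ?E = "edge_alpha V r k \<alpha>" and ?N = "N_alpha V r k \<alpha>"
  have reach_N: "?E\<^sup>*\<^sup>* x z \<and> ?E\<^sup>*\<^sup>* z x" if "x \<in> V" "z \<in> insert x (?N x)" for x z
  proof (cases "z = x")
    case False
    then have "?E x z \<and> ?E z x"
      using that N_alpha_subset[of V r k \<alpha> x] by (auto simp: edge_alpha_def)
    then show ?thesis by blast
  qed simp
  have "a \<in> V" "b \<in> V" using assms(3) by (simp_all add: edge_R_def)
  with assms(1) show ?thesis
    using assms(3)
  proof (induction a b rule: finite_dist_induct)
    case (less x y)
    show ?case
    proof (cases "?E x y")
      case False
      then obtain z1 z2 where z: "z1 \<in> insert x (?N x)" "z2 \<in> insert y (?N y)"
        and "dist z1 z2 < dist x y"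
        using cbtc_shorter_pair[where r = r and k = k, OF assms(1,2) less.prems] by blast
      moreover have "z1 \<in> V" "z2 \<in> V"
        using z less.hyps N_alpha_subset[of V r k \<alpha> x] N_alpha_subset[of V r k \<alpha> y] by auto
      ultimately have "?E\<^sup>*\<^sup>* z1 z2"
        using less.IH less.prems by (cases "z1 = z2") (auto simp: edge_R_def)
      then show ?thesis
        using reach_N[of x z1] reach_N[of y z2] z less.hyps by (meson rtranclp_trans)
    qed simp
  qed
qed

theorem theorem1:
  fixes V :: "complex set" and R \<alpha> :: real and r :: "nat \<Rightarrow> real" and k :: nat
  assumes "finite V"
    and "R > 0"
    and "k \<ge> 1"
    and "r 1 > 0"
    and "\<And>i j. 1 \<le> i \<Longrightarrow> i < j \<Longrightarrow> j \<le> k \<Longrightarrow> r i < r j"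
    and "r k = R"
    and "0 < \<alpha>" and "\<alpha> \<le> 5 * pi / 6"
    and "u \<in> V" and "v \<in> V"
  shows "(edge_alpha V r k \<alpha>)\<^sup>*\<^sup>* u v \<longleftrightarrow> (edge_R V R)\<^sup>*\<^sup>* u v"
proof
  have "mono_on {1..k} r"
    using assms(5) by (intro strict_mono_on_imp_mono_on strict_mono_onI) auto
  then have "edge_alpha V r k \<alpha> \<le> edge_R V R"
    using edge_alpha_imp_edge_R assms(3,6) by blast
  then show "(edge_alpha V r k \<alpha>)\<^sup>*\<^sup>* u v \<Longrightarrow> (edge_R V R)\<^sup>*\<^sup>* u v"
    using rtranclp_mono by blast
next
  have "edge_R V R \<le> (edge_alpha V r k \<alpha>)\<^sup>*\<^sup>*"
    using edge_R_imp_edge_alpha_path assms(1,6,8) by blast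
  then show "(edge_R V R)\<^sup>*\<^sup>* u v \<Longrightarrow> (edge_alpha V r k \<alpha>)\<^sup>*\<^sup>* u v"
    using rtranclp_mono[of "edge_R V R" "(edge_alpha V r k \<alpha>)\<^sup>*\<^sup>*"] by auto
qed

end
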